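(* Let $\mathbf{w} = (w_1, w_2, \ldots)$ be an arbitrary sequence of elements of $A^+$ (with $A=\{a,b\}$) such that $a \notin S_{\mathbf{w}}$ and $b \notin S_{\mathbf{w}}$. Then either $w_n \in aA^*b$ for all $n$ and $S_{\mathbf{w}} \subseteq aA^*b \cup \{\varepsilon\}$, or $w_n \in bA^*a$ for all $n$ and $S_{\mathbf{w}} \subseteq bA^*a \cup \{\varepsilon\}$.
   Context: $A = \{a,b\}$; $A^*$ is the free monoid on $A$ with empty word $\varepsilon$, and $A^+ = A^*\setminus\{\varepsilon\}$. For a sequence $\mathbf{w}=(w_1,w_2,\ldots)$ in $A^+$, $S_{\mathbf{w}}$ is the least submonoid $S$ of $A^*$ satisfying: (C1) if $w_n = s v u v s'$ for some $n$, with $s, s' \in S$ and $u, v \in A^*$, then $v \in S$; (C2) if $w_m = s v t$ and $w_n = t' v s'$ for some $m \neq n$, with $s, s' \in S$ and $t, t', v \in A^*$, then $v \in S$. (Intersections of such submonoids again satisfy (C1),(C2), and $A^*$ satisfies them, so the least one exists.) *)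

theory Defs
  imports Main
begin

datatype letter = La | Lb

type_synonym word = "letter list"

definition submonoid :: "word set \<Rightarrow> bool" where
  "submonoid S \<longleftrightarrow> [] \<in> S \<and> (\<forall>x\<in>S. \<forall>y\<in>S. x @ y \<in> S)"

definition C1 :: "(nat \<Rightarrow> word) \<Rightarrow> word set \<Rightarrow> bool" where
  "C1 w S \<longleftrightarrow> (\<forall>n s s' u v. s \<in> S \<longrightarrow> s' \<in> S \<longrightarrow>
       w n = s @ v @ u @ v @ s' \<longrightarrow> v \<in> S)"

definition C2 :: "(nat \<Rightarrow> word) \<Rightarrow> word set \<Rightarrow> bool" where
  "C2 w S \<longleftrightarrow> (\<forall>m n s s' t t' v. m \<noteq> n \<longrightarrow> s \<in> S \<longrightarrow> s' \<in> S \<longrightarrow>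
       w m = s @ v @ t \<longrightarrow> w n = t' @ v @ s' \<longrightarrow> v \<in> S)"

definition Sw :: "(nat \<Rightarrow> word) \<Rightarrow> word set" where
  "Sw w = \<Inter> {S. submonoid S \<and> C1 w S \<and> C2 w S}"

definition starts_ends :: "letter \<Rightarrow> letter \<Rightarrow> word set" where
  "starts_ends x y = {[x] @ u @ [y] | u. True}"

end

theory Submission
  imports Defs
begin

text \<open>
  If a letter c began one word w m and ended another w n with m \<noteq> n, then (C2) with
  s = s' = \<epsilon> would put c into S; so all words share their first letter x and their
  last letter y, and x \<noteq> y. Conversely, if some nonempty v \<in> S occurs in a word after a
  prefix from S and began with y, then the stretch from that y to the final y of the word has
  the form y r y, and (C1) would put y into S; symmetrically v cannot end with x. Hence the
  elements of S lying in x A* y \<union> {\<epsilon>} form a submonoid that already satisfies (C1) and (C2),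
  and minimality of S gives the inclusion.
\<close>

lemma Sw_least: "submonoid S \<Longrightarrow> C1 w S \<Longrightarrow> C2 w S \<Longrightarrow> Sw w \<subseteq> S"
  unfolding Sw_def by auto

lemma Nil_in_Sw: "[] \<in> Sw w"
  unfolding Sw_def submonoid_def by auto

lemma append_in_Sw: "x \<in> Sw w \<Longrightarrow> y \<in> Sw w \<Longrightarrow> x @ y \<in> Sw w"
  unfolding Sw_def submonoid_def by auto

lemma Sw_C1: "s \<in> Sw w \<Longrightarrow> s' \<in> Sw w \<Longrightarrow> w n = s @ v @ u @ v @ s' \<Longrightarrow> v \<in> Sw w"
  unfolding Sw_def C1_def by blast

lemma Sw_C2:
  "m \<noteq> n \<Longrightarrow> s \<in> Sw w \<Longrightarrow> s' \<in> Sw w \<Longrightarrow> w m = s @ v @ t \<Longrightarrow> w n = t' @ v @ s'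
    \<Longrightarrow> v \<in> Sw w"
  unfolding Sw_def C2_def by blast

lemma letter_neq_neq_eq: "(x::letter) \<noteq> z \<Longrightarrow> y \<noteq> z \<Longrightarrow> x = y"
  by (cases x; cases y; cases z) auto

lemma starts_ends_iff:
  assumes "x \<noteq> y"
  shows "v \<in> starts_ends x y \<longleftrightarrow> v \<noteq> [] \<and> hd v = x \<and> last v = y"
proof
  assume "v \<noteq> [] \<and> hd v = x \<and> last v = y"
  then have "v = x # tl v" and "tl v \<noteq> []" and "last (tl v) = y"
    using assms by (cases v; auto simp: last_tl)+
  then have "v = [x] @ butlast (tl v) @ [y]"
    by (metis append_Cons append_Nil append_butlast_last_id)
  then show "v \<in> starts_ends x y"
    unfolding starts_ends_def by blast
qed (auto simp: starts_ends_def)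

lemma starts_ends_append:
  "u \<in> starts_ends x y \<Longrightarrow> v \<in> starts_ends x y \<Longrightarrow> u @ v \<in> starts_ends x y"
  unfolding starts_ends_def by auto

lemma letter_sequences_const:
  fixes f g :: "nat \<Rightarrow> letter"
  assumes "\<And>m n. m \<noteq> n \<Longrightarrow> f m \<noteq> g n"
  obtains x y where "x \<noteq> y" "\<And>n. f n = x" "\<And>n. g n = y"
proof -
  have "f i = f j \<and> g i = g j" for i j
  proof -
    define k where "k = i + j + 1"
    have "i \<noteq> k" "j \<noteq> k"
      unfolding k_def by auto
    then have "f i \<noteq> g k" "f j \<noteq> g k" "g i \<noteq> f k" "g j \<noteq> f k"
      using assms by metis+
    then show ?thesis
      using letter_neq_neq_eq by blast
  qed
  moreover have "f 0 \<noteq> g 1"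
    using assms by simp
  ultimately show ?thesis
    using that[of "f 0" "g 0"] by metis
qed

lemma Sw_first_last_letter:
  assumes "m \<noteq> n" "w m = c # u" "w n = u' @ [c]"
  shows "[c] \<in> Sw w"
  using Sw_C2[where s = "[]" and s' = "[]" and v = "[c]"] assms Nil_in_Sw by simp

lemma Sw_letter_before_last:
  assumes "w n = s @ (y # v) @ t" "s \<in> Sw w" "y # v \<in> Sw w" "last (w n) = y"
  shows "[y] \<in> Sw w"
proof (cases "v @ t = []")
  case True
  then show ?thesis using assms(3) by simp
next
  case False
  moreover have "last (v @ t) = y"
    using assms(1,4) False by (auto split: if_splits)
  ultimately obtain r where "v @ t = r @ [y]"
    by (metis append_butlast_last_id)
  then have "w n = s @ [y] @ r @ [y] @ []"
    using assms(1) by simp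
  then show ?thesis
    using Sw_C1[OF assms(2) Nil_in_Sw] by blast
qed

lemma Sw_letter_after_first:
  assumes "w n = t @ (v @ [x]) @ s" "s \<in> Sw w" "v @ [x] \<in> Sw w" "hd (w n) = x"
  shows "[x] \<in> Sw w"
proof (cases "t @ v = []")
  case True
  then show ?thesis using assms(3) by simp
next
  case False
  moreover have "hd ((t @ v) @ x # s) = x"
    using assms(1,4) by simp
  ultimately obtain r where "t @ v = x # r"
    by (cases "t @ v") auto
  then have "w n = [] @ [x] @ r @ [x] @ s"
    using assms(1) by simp
  then show ?thesis
    using Sw_C1[OF Nil_in_Sw assms(2)] by blast
qed

lemma Sw_factor_in_starts_ends:
  assumes words: "\<And>n. w n \<in> starts_ends x y" and "x \<noteq> y"
    and "[x] \<notin> Sw w" "[y] \<notin> Sw w"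
    and "v \<in> Sw w" "v \<noteq> []"
    and "w n = s @ v @ t" "s \<in> Sw w" "w m = t' @ v @ s'" "s' \<in> Sw w"
  shows "v \<in> starts_ends x y"
proof -
  have ends: "hd (w k) = x" "last (w k) = y" for k
    using words[of k] \<open>x \<noteq> y\<close> by (auto simp: starts_ends_iff)
  have "hd v \<noteq> y"
  proof
    assume "hd v = y"
    then have "w n = s @ (y # tl v) @ t" "y # tl v \<in> Sw w"
      using \<open>v \<noteq> []\<close> assms(5,7) by (cases v; simp)+
    then show False
      using Sw_letter_before_last assms(4,8) ends(2) by metis
  qed
  moreover have "last v \<noteq> x"
  proof
    assume "last v = x"
    then have "v = butlast v @ [x]"
      using \<open>v \<noteq> []\<close> by (metis append_butlast_last_id)
    then have "w m = t' @ (butlast v @ [x]) @ s'" "butlast v @ [x] \<in> Sw w"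
      using assms(5,9) by simp_all
    then show False
      using Sw_letter_after_first assms(3,10) ends(1) by metis
  qed
  ultimately show ?thesis
    using \<open>x \<noteq> y\<close> \<open>v \<noteq> []\<close> letter_neq_neq_eq by (metis starts_ends_iff)
qed

lemma Sw_subset_starts_ends:
  assumes words: "\<And>n. w n \<in> starts_ends x y" and "x \<noteq> y"
    and "[x] \<notin> Sw w" "[y] \<notin> Sw w"
  shows "Sw w \<subseteq> starts_ends x y \<union> {[]}"
proof -
  let ?T = "Sw w \<inter> (starts_ends x y \<union> {[]})"
  have factor: "v \<in> ?T"
    if "v \<in> Sw w" "w n = s @ v @ t" "s \<in> Sw w" "w m = t' @ v @ s'" "s' \<in> Sw w"
    for v n s t m t' s'
    using Sw_factor_in_starts_ends[OF assms] that by blast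
  have "submonoid ?T"
    unfolding submonoid_def using Nil_in_Sw append_in_Sw starts_ends_append by fastforce
  moreover have "C1 w ?T"
    unfolding C1_def
  proof (intro allI impI)
    fix n s s' u v
    assume "s \<in> ?T" "s' \<in> ?T" and wn: "w n = s @ v @ u @ v @ s'"
    then have "v \<in> Sw w" using Sw_C1 by blast
    then show "v \<in> ?T"
      using factor[of v n s "u @ v @ s'" n "s @ v @ u" s'] wn \<open>s \<in> ?T\<close> \<open>s' \<in> ?T\<close> by simp
  qed
  moreover have "C2 w ?T"
    unfolding C2_def using Sw_C2 factor by blast
  ultimately show ?thesis
    using Sw_least by blast
qed

theorem lemma3p4:
  fixes w :: "nat \<Rightarrow> word"
  assumes "\<forall>n. w n \<noteq> []"
    and "[La] \<notin> Sw w" and "[Lb] \<notin> Sw w"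
  shows "((\<forall>n. w n \<in> starts_ends La Lb) \<and> Sw w \<subseteq> starts_ends La Lb \<union> {[]})
       \<or> ((\<forall>n. w n \<in> starts_ends Lb La) \<and> Sw w \<subseteq> starts_ends Lb La \<union> {[]})"
proof -
  have not_in_Sw: "[c] \<notin> Sw w" for c
    using assms(2,3) by (cases c) auto
  have "hd (w m) \<noteq> last (w n)" if "m \<noteq> n" for m n
    using Sw_first_last_letter[OF that, of w "hd (w m)" "tl (w m)" "butlast (w n)"]
      assms(1) not_in_Sw by (metis append_butlast_last_id list.collapse)
  then obtain x y where "x \<noteq> y" "\<And>n. hd (w n) = x" "\<And>n. last (w n) = y"
    using letter_sequences_const[of "\<lambda>n. hd (w n)" "\<lambda>n. last (w n)"] by blast
  then have words: "\<And>n. w n \<in> starts_ends x y"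
    using assms(1) by (simp add: starts_ends_iff)
  have "Sw w \<subseteq> starts_ends x y \<union> {[]}"
    using Sw_subset_starts_ends[OF words \<open>x \<noteq> y\<close> not_in_Sw not_in_Sw] .
  with words \<open>x \<noteq> y\<close> show ?thesis
    by (cases x; cases y) auto
qed

end
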